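(* Let $K_0$, $L$, $I$ be positive integers with $K_0\ge3$, $L\ge2$ and $I\ge K_0(K_0+1)/2$. Then $$\Theta(K_0,I)\ge\frac{I^2}{2(K_0+1)}\left(1+\frac{(K_0-1)(K_0+1)}{I}-\frac{K_0(K_0+2)(K_0+1)^2}{12I^2}\right).$$
   Context: For $(k,m)\in\mathbb{N}^2$ put $\|(k,m)\|=k+m$. Define $\Theta(K_0,I)=\min\{\|(k_1,m_1)\|+\cdots+\|(k_I,m_I)\|\}$, the minimum taken over all $I$-tuples of pairwise distinct pairs $(k_1,m_1),\dots,(k_I,m_I)\in\mathbb{N}^2$ with $m_1,\dots,m_I\le K_0$ ($\mathbb{N}$ includes $0$). *)

theory Defs
  imports Complex_Main
begin

text \<open>The set of attainable sums is a nonempty set of naturals, so Inf is its minimum.\<close>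
definition Theta :: "nat \<Rightarrow> nat \<Rightarrow> nat" where
  "Theta K0 I = Inf {(\<Sum>i<I. fst (p i) + snd (p i)) | p :: nat \<Rightarrow> nat \<times> nat.
                      inj_on p {..<I} \<and> (\<forall>i<I. snd (p i) \<le> K0)}"

end

theory Submission imports Defs begin

text \<open>A weak LP-duality argument: for every N, each pair (k,m) satisfies
  k + m \<ge> N - max(0, N - k - m), and for m \<le> K0 the correction max(0, N - k - m) is nonzero
  only on the box [0,N) \<times> [0,K0]. Summing over I distinct pairs gives
  \<Theta>(K0,I) \<ge> N I - D(N,K0), where D(N,K0), the total deficit of the box, is an explicit cubic.
  Writing I = K0(K0+1)/2 + (K0+1) j + r with 0 \<le> r \<le> K0 and taking N = K0 + j, this bound
  exceeds the claimed one by exactly r(K0+1-r)/(2(K0+1)) \<ge> 0.\<close>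

definition box_deficit :: "nat \<Rightarrow> nat \<Rightarrow> nat" where
  "box_deficit N K = (\<Sum>q\<in>{..<N} \<times> {..K}. N - (fst q + snd q))"

lemma Theta_attained:
  "\<exists>p :: nat \<Rightarrow> nat \<times> nat. inj_on p {..<I} \<and> (\<forall>i<I. snd (p i) \<le> K) \<and>
     Theta K I = (\<Sum>i<I. fst (p i) + snd (p i))"
proof -
  let ?S = "{(\<Sum>i<I. fst (p i) + snd (p i)) | p :: nat \<Rightarrow> nat \<times> nat.
              inj_on p {..<I} \<and> (\<forall>i<I. snd (p i) \<le> K)}"
  have "(\<Sum>i<I. fst (i, 0::nat) + snd (i, 0::nat)) \<in> ?S"
    by (intro CollectI exI[of _ "\<lambda>i. (i, 0)"]) (auto simp: inj_on_def)
  then have "Theta K I \<in> ?S"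
    unfolding Theta_def by (intro Inf_nat_def1) blast
  then show ?thesis by blast
qed

lemma card_mult_le_sum_plus_box_deficit:
  fixes A :: "(nat \<times> nat) set"
  assumes "finite A" and "\<forall>q\<in>A. snd q \<le> K"
  shows "N * card A \<le> (\<Sum>q\<in>A. fst q + snd q) + box_deficit N K"
proof -
  define g where "g q = N - (fst q + snd q)" for q :: "nat \<times> nat"
  have "N * card A = (\<Sum>q\<in>A. N)"
    by simp
  also have "\<dots> \<le> (\<Sum>q\<in>A. (fst q + snd q) + g q)"
    by (intro sum_mono) (simp add: g_def)
  also have "\<dots> = (\<Sum>q\<in>A. fst q + snd q) + (\<Sum>q\<in>A. g q)"
    by (rule sum.distrib)
  also have "(\<Sum>q\<in>A. g q) = (\<Sum>q\<in>A \<inter> {..<N} \<times> {..K}. g q)"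
    using assms by (intro sum.mono_neutral_right) (auto simp: g_def)
  also have "\<dots> \<le> (\<Sum>q\<in>{..<N} \<times> {..K}. g q)"
    by (intro sum_mono2) auto
  finally show ?thesis
    by (simp add: box_deficit_def g_def)
qed

lemma Theta_lower_bound: "N * I \<le> Theta K I + box_deficit N K"
proof -
  obtain p :: "nat \<Rightarrow> nat \<times> nat" where inj: "inj_on p {..<I}"
    and bounded: "\<forall>i<I. snd (p i) \<le> K" and Theta: "Theta K I = (\<Sum>i<I. fst (p i) + snd (p i))"
    using Theta_attained by blast
  have "N * card (p ` {..<I}) \<le> (\<Sum>q\<in>p ` {..<I}. fst q + snd q) + box_deficit N K"
    using bounded by (intro card_mult_le_sum_plus_box_deficit) auto
  then show ?thesis
    using inj by (simp add: card_image sum.reindex Theta)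
qed

lemma sum_row_deficit:
  "2 * (\<Sum>k<N. N - (k + m)) = (N - m) * (N - m + 1::nat)"
proof (induction N)
  case (Suc N)
  have shift: "(\<Sum>k<Suc N. Suc N - (k + m)) = (Suc N - m) + (\<Sum>k<N. N - (k + m))"
    by (subst sum.lessThan_Suc_shift) simp
  show ?case
  proof (cases "m \<le> N")
    case True
    then obtain d where N: "N = m + d"
      using le_Suc_ex by blast
    have "2 * (\<Sum>k<Suc N. Suc N - (k + m)) = 2 * Suc d + 2 * (\<Sum>k<N. N - (k + m))"
      using shift by (simp add: N)
    also have "\<dots> = Suc d * (Suc d + 1)"
      using Suc.IH by (simp add: N)
    finally show ?thesis
      by (simp add: N)
  qed (use Suc in auto)
qed simp

lemma sum_consecutive_products_closed_form:
  assumes "K \<le> N"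
  shows "3 * (\<Sum>m\<le>K. real ((N - m) * (N - m + 1))) =
    real N * (real N + 1) * (real N + 2) - (real N - real K - 1) * (real N - real K) * (real N - real K + 1)"
  using assms
proof (induction K)
  case (Suc K)
  have "real (N - Suc K) = real N - real K - 1"
    using Suc.prems by (simp add: of_nat_diff)
  then have "real ((N - Suc K) * (N - Suc K + 1)) = (real N - real K - 1) * (real N - real K)"
    by (simp only: of_nat_mult of_nat_add of_nat_1) simp
  then have "3 * (\<Sum>m\<le>Suc K. real ((N - m) * (N - m + 1))) =
      3 * (\<Sum>m\<le>K. real ((N - m) * (N - m + 1))) + 3 * (real N - real K - 1) * (real N - real K)"
    by (simp only: sum.atMost_Suc) (simp add: algebra_simps)
  with Suc show ?case
    by (simp add: algebra_simps)
qed (simp add: algebra_simps)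

lemma box_deficit_closed_form:
  assumes "K \<le> N"
  shows "6 * real (box_deficit N K) =
    real N * (real N + 1) * (real N + 2) - (real N - real K - 1) * (real N - real K) * (real N - real K + 1)"
proof -
  have "box_deficit N K = (\<Sum>k<N. \<Sum>m\<le>K. N - (k + m))"
    unfolding box_deficit_def by (simp add: sum.cartesian_product split_def)
  also have "\<dots> = (\<Sum>m\<le>K. \<Sum>k<N. N - (k + m))"
    by (rule sum.swap)
  finally have "2 * box_deficit N K = (\<Sum>m\<le>K. 2 * (\<Sum>k<N. N - (k + m)))"
    by (simp only: sum_distrib_left[symmetric])
  also have "\<dots> = (\<Sum>m\<le>K. (N - m) * (N - m + 1))"
    by (simp only: sum_row_deficit)
  finally have rows: "2 * box_deficit N K = (\<Sum>m\<le>K. (N - m) * (N - m + 1))" .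
  have "6 * real (box_deficit N K) = 3 * real (2 * box_deficit N K)"
    by simp
  also have "\<dots> = 3 * (\<Sum>m\<le>K. real ((N - m) * (N - m + 1)))"
    by (simp only: rows of_nat_sum)
  finally show ?thesis
    using sum_consecutive_products_closed_form[OF assms] by simp
qed

lemma cubic_bound_eq_quadratic_bound_plus_slack:
  fixes k n r x :: real
  assumes "x \<noteq> 0" and "k + 1 \<noteq> 0" and x: "x = k * (k + 1) / 2 + (k + 1) * (n - k) + r"
  shows "n * x - (n * (n + 1) * (n + 2) - (n - k - 1) * (n - k) * (n - k + 1)) / 6 =
    x^2 / (2 * (k + 1)) * (1 + (k - 1) * (k + 1) / x - k * (k + 2) * (k + 1)^2 / (12 * x^2))
      + r * (k + 1 - r) / (2 * (k + 1))"
proof -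
  have "1 + (k - 1) * (k + 1) / x - k * (k + 2) * (k + 1)^2 / (12 * x^2)
      = (12 * x^2 + 12 * (k^2 - 1) * x - k * (k + 2) * (k + 1)^2) / (12 * x^2)"
    using assms(1) by (simp add: field_simps power2_eq_square)
  then have target: "x^2 / (2 * (k + 1)) * (1 + (k - 1) * (k + 1) / x - k * (k + 2) * (k + 1)^2 / (12 * x^2))
      = (12 * x^2 + 12 * (k^2 - 1) * x - k * (k + 2) * (k + 1)^2) / (24 * (k + 1))"
    using assms(1,2) by (simp add: divide_simps)
  have "24 * (k + 1) * (n * x - (n * (n + 1) * (n + 2) - (n - k - 1) * (n - k) * (n - k + 1)) / 6)
      = 12 * x^2 + 12 * (k^2 - 1) * x - k * (k + 2) * (k + 1)^2 + 12 * r * (k + 1 - r)"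
    unfolding x by (simp add: field_simps power2_eq_square)
  then have "n * x - (n * (n + 1) * (n + 2) - (n - k - 1) * (n - k) * (n - k + 1)) / 6
      = (12 * x^2 + 12 * (k^2 - 1) * x - k * (k + 2) * (k + 1)^2 + 12 * r * (k + 1 - r)) / (24 * (k + 1))"
    using assms(2) by (simp add: eq_divide_eq mult.commute)
  then show ?thesis
    unfolding target using assms(2) by (simp add: add_divide_distrib frac_eq_eq)
qed

lemma Theta_ge_cubic_bound:
  assumes "K \<le> N"
  shows "real N * real I - (real N * (real N + 1) * (real N + 2)
      - (real N - real K - 1) * (real N - real K) * (real N - real K + 1)) / 6 \<le> real (Theta K I)"
proof -
  have "real N * real I \<le> real (Theta K I) + real (box_deficit N K)"
    using Theta_lower_bound[of N I K] by (simp flip: of_nat_mult of_nat_add)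
  moreover have "real (box_deficit N K) = (real N * (real N + 1) * (real N + 2)
      - (real N - real K - 1) * (real N - real K) * (real N - real K + 1)) / 6"
    using box_deficit_closed_form[OF assms] by simp
  ultimately show ?thesis
    unfolding diff_le_eq by simp
qed

theorem lemma12p2:
  fixes K0 L I :: nat
  assumes "K0 \<ge> 3" and "L \<ge> 2" and "real I \<ge> real K0 * (real K0 + 1) / 2"
  shows "real (Theta K0 I) \<ge> (real I)^2 / (2 * (real K0 + 1)) *
           (1 + (real K0 - 1) * (real K0 + 1) / real I
              - real K0 * (real K0 + 2) * (real K0 + 1)^2 / (12 * (real I)^2))"
proof -
  define T where "T = K0 * (K0 + 1) div 2"
  have T: "real T = real K0 * (real K0 + 1) / 2"
    unfolding T_def by (simp add: real_of_nat_div algebra_simps)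
  with assms(3) have "T \<le> I"
    by simp
  define j where "j = (I - T) div (K0 + 1)"
  define r where "r = (I - T) mod (K0 + 1)"
  define N where "N = K0 + j"
  have I_eq: "I = T + (K0 + 1) * j + r"
    using mult_div_mod_eq[of "K0 + 1" "I - T"] \<open>T \<le> I\<close> unfolding j_def r_def by linarith
  have I_real: "real I = real K0 * (real K0 + 1) / 2 + (real K0 + 1) * (real N - real K0) + real r"
    unfolding T[symmetric] I_eq N_def by (simp add: algebra_simps)
  have "0 < real K0 * (real K0 + 1) / 2"
    using assms(1) by simp
  with assms(3) have I_nonzero: "real I \<noteq> 0"
    by linarith
  have "real K0 + 1 \<noteq> 0"
    by simp
  note identity = cubic_bound_eq_quadratic_bound_plus_slack[OF I_nonzero this I_real]
  have "r \<le> K0"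
    unfolding r_def using mod_less_divisor[of "K0 + 1" "I - T"] by linarith
  then have "real r * (real K0 + 1 - real r) / (2 * (real K0 + 1)) \<ge> 0"
    by simp
  moreover have "K0 \<le> N"
    by (simp add: N_def)
  ultimately show ?thesis
    using Theta_ge_cubic_bound[of K0 N I] identity by linarith
qed

end
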